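(* Let $\Phi : M_m \to M_n$ be a transpose-preserving linear map. If $W^{1+i}_{\min}(C_\Phi) \ge 0$, then there exist matrices $A_1,\dots,A_k \in M_{n,m}$ and a linear map $\Psi: M_m\to M_n$ with $\Psi(X) = 0$ for every symmetric $X\in M_m$, such that \[ \Phi(X) = \sum_j A_j X A_j^T + \Psi(X) \quad\text{for all } X\in M_m; \] consequently $\Phi$ is positive.
   Context: $M_{n,m}$ denotes real $n\times m$ matrices, $M_n = M_{n,n}$, and $M_m\otimes M_n$ is identified with $M_{mn}$ via the Kronecker product. A linear map $\Phi: M_m\to M_n$ is transpose-preserving if $\Phi(X^T) = \Phi(X)^T$ for all $X$; it is positive if $\Phi(X)$ is positive semidefinite whenever $X$ is symmetric positive semidefinite. The Choi matrix is $C_\Phi = \sum_{i,j=1}^m E_{i,j}\otimes\Phi(E_{i,j})$, with $E_{i,j}$ the matrix units. For $A=\sum_j X_j\otimes Y_j\in M_m\otimes M_n$, the partial transpose is $A^\Gamma = \sum_j X_j\otimes Y_j^T$. The numerical range of $A\in M_N(\mathbb{C})$ is $W(A) = \{\mathbf{x}^*A\mathbf{x} : \mathbf{x}\in\mathbb{C}^N, \|\mathbf{x}\|=1\}$. For real $B$, $W^{1+i}(B) = \{c\in\mathbb{R} : c(1+i)\in W(B+iB^\Gamma)\}$, a nonempty compact interval with minimum $W^{1+i}_{\min}(B)$. *)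

theory Defs
  imports "HOL-Analysis.Analysis"
begin

text \<open>M_m \<otimes> M_n is identified with M_{mn} by indexing rows/columns with pairs
  ('m \<times> 'n): (X \<otimes> Y)_{(i,k),(j,l)} = X_{ij} Y_{kl}.\<close>

definition mat_unit :: "'m::finite \<Rightarrow> 'm \<Rightarrow> real^'m^'m" where
  "mat_unit i j = (\<chi> a b. if a = i \<and> b = j then 1 else 0)"

definition transpose_preserving :: "(real^'m::finite^'m \<Rightarrow> real^'n::finite^'n) \<Rightarrow> bool" where
  "transpose_preserving \<Phi> \<longleftrightarrow> (\<forall>X. \<Phi> (transpose X) = transpose (\<Phi> X))"

definition psd :: "real^'n::finite^'n \<Rightarrow> bool" where
  "psd X \<longleftrightarrow> transpose X = X \<and> (\<forall>v. 0 \<le> v \<bullet> (X *v v))"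

definition positive_map :: "(real^'m::finite^'m \<Rightarrow> real^'n::finite^'n) \<Rightarrow> bool" where
  "positive_map \<Phi> \<longleftrightarrow> (\<forall>X. psd X \<longrightarrow> psd (\<Phi> X))"

text \<open>Choi matrix C = \<Sum>_{i,j} E_ij \<otimes> \<Phi>(E_ij), entry at ((i,k),(j,l)) is \<Phi>(E_ij)_{kl}.\<close>
definition choi :: "(real^'m::finite^'m \<Rightarrow> real^'n::finite^'n) \<Rightarrow> real^('m \<times> 'n)^('m \<times> 'n)" where
  "choi \<Phi> = (\<chi> r s. \<Sum>i\<in>UNIV. \<Sum>j\<in>UNIV.
       (mat_unit i j $ fst r $ fst s) * (\<Phi> (mat_unit i j) $ snd r $ snd s))"

text \<open>Partial transpose: (X \<otimes> Y)^\<Gamma> = X \<otimes> Y^T.\<close>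
definition partial_transpose :: "real^('m::finite \<times> 'n::finite)^('m \<times> 'n) \<Rightarrow> real^('m \<times> 'n)^('m \<times> 'n)" where
  "partial_transpose B = (\<chi> r s. B $ (fst r, snd s) $ (fst s, snd r))"

definition numerical_range :: "complex^'N::finite^'N \<Rightarrow> complex set" where
  "numerical_range A = {(\<Sum>i\<in>UNIV. cnj (x $ i) * (A *v x) $ i) | x. norm x = 1}"

definition W1i :: "real^('m::finite \<times> 'n::finite)^('m \<times> 'n) \<Rightarrow> real set" where
  "W1i B = {c. complex_of_real c * (1 + \<i>) \<in>
      numerical_range (\<chi> r s. complex_of_real (B $ r $ s)
                               + \<i> * complex_of_real (partial_transpose B $ r $ s))}"

definition W1i_min :: "real^('m::finite \<times> 'n::finite)^('m \<times> 'n) \<Rightarrow> real" where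
  "W1i_min B = Inf (W1i B)"

end

theory Submission
  imports Defs
begin

text \<open>Write B for the Choi matrix of \<Phi> and G for its partial transpose; both are symmetric since
  \<Phi> preserves transposes. For x = a + i b the value of x* (B + i G) x is
  (a'Ba + b'Bb) + i (a'Ga + b'Gb), so W1i_min B \<ge> 0 says that the form of B is nonnegative on all
  pairs (a, b) on which the forms of B and G have the same sum. The difference B - G has zero
  diagonal, so its form is zero or indefinite, and a Finsler-type argument yields a t with
  P = B + t (B - G) positive semidefinite. Writing P as a sum of rank-one matrices v v' turns it
  into the Choi matrix of a map X \<mapsto> \<Sigma> A X A'; on symmetric X the map with Choi matrix B - G is
  \<Phi> X - (\<Phi> X)' = 0, so \<Phi> agrees there with that sum of congruences.\<close>

lemma inner_mat_vec_symmetric: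
  fixes M :: "real^'n::finite^'n"
  assumes "transpose M = M"
  shows "x \<bullet> (M *v y) = y \<bullet> (M *v x)"
  by (metis assms dot_lmul_matrix inner_commute transpose_matrix_vector)

lemma inner_axis_mat_vec_axis: "axis i 1 \<bullet> ((M::real^'n::finite^'n) *v axis j 1) = M$i$j"
  by (simp add: inner_axis' matrix_vector_mult_basis column_def)

lemma quadratic_form_add_scaleR:
  fixes M :: "real^'n::finite^'n"
  assumes "transpose M = M"
  shows "(x + c *\<^sub>R y) \<bullet> (M *v (x + c *\<^sub>R y))
       = x \<bullet> (M *v x) + 2 * c * (x \<bullet> (M *v y)) + c^2 * (y \<bullet> (M *v y))"
  using inner_mat_vec_symmetric[OF assms, of x y]
  by (simp add: algebra_simps inner_add_left inner_add_right power2_eq_square)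

lemma quadratic_form_scaleR:
  "(c *\<^sub>R x) \<bullet> ((M::real^'n::finite^'n) *v (c *\<^sub>R x)) = c^2 * (x \<bullet> (M *v x))"
  by (simp add: algebra_simps power2_eq_square)

lemma inner_mat_vec_sum:
  "x \<bullet> ((M::real^'n::finite^'n) *v y) = (\<Sum>r\<in>UNIV. \<Sum>s\<in>UNIV. M$r$s * x$r * y$s)"
  by (simp add: inner_vec_def matrix_vector_mult_def sum_distrib_left algebra_simps)

lemma zero_diagonal_quadratic_form_signs:
  fixes C :: "real^'n::finite^'n"
  assumes sym: "transpose C = C" and diag: "\<forall>r. C$r$r = 0"
  shows "(\<exists>y. 0 < y \<bullet> (C *v y)) \<longleftrightarrow> (\<exists>z. z \<bullet> (C *v z) < 0)"
proof -
  have both_signs: "(\<exists>y. 0 < y \<bullet> (C *v y)) \<and> (\<exists>z. z \<bullet> (C *v z) < 0)"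
    if nonzero: "w \<bullet> (C *v w) \<noteq> 0" for w
  proof -
    have "C \<noteq> 0" using nonzero by auto
    then obtain r s where rs: "C$r$s \<noteq> 0" by (auto simp: vec_eq_iff)
    define e where "e c = axis r 1 + c *\<^sub>R axis s (1::real)" for c
    have "e c \<bullet> (C *v e c) = 2 * c * C$r$s" for c
      using rs diag unfolding e_def
      by (auto simp: quadratic_form_add_scaleR[OF sym] inner_axis_mat_vec_axis)
    then have q: "e 1 \<bullet> (C *v e 1) = 2 * C$r$s" "e (-1) \<bullet> (C *v e (-1)) = - (2 * C$r$s)"
      by simp_all
    show ?thesis
    proof (cases "C$r$s > 0")
      case True
      then show ?thesis using q by (intro conjI exI[of _ "e 1"] exI[of _ "e (-1)"]) simp_all
    next
      case False
      then show ?thesis using q rs by (intro conjI exI[of _ "e (-1)"] exI[of _ "e 1"]) simp_all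
    qed
  qed
  show ?thesis using both_signs by fastforce
qed

lemma quadratic_nonneg_combination_exists:
  fixes qa qc :: "'v::real_vector \<Rightarrow> real"
  assumes qa_scaleR: "\<And>c y. qa (c *\<^sub>R y) = c^2 * qa y"
    and qc_scaleR: "\<And>c y. qc (c *\<^sub>R y) = c^2 * qc y"
    and nonneg: "\<And>y z. qc y + qc z = 0 \<Longrightarrow> 0 \<le> qa y + qa z"
    and signs: "(\<exists>y. 0 < qc y) \<longleftrightarrow> (\<exists>z. qc z < 0)"
  shows "\<exists>t. \<forall>y. 0 \<le> qa y + t * qc y"
proof -
  have nonneg_null: "0 \<le> qa y" if "qc y = 0" for y
    using nonneg[of y 0] that qa_scaleR[of 0 0] qc_scaleR[of 0 0] by simp
  show ?thesis
  proof (cases "\<exists>y. 0 < qc y")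
    case False
    with signs have "qc y = 0" for y by (meson not_less_iff_gr_or_eq)
    then show ?thesis using nonneg_null by (intro exI[of _ 0]) simp
  next
    case True
    then obtain y1 where y1: "0 < qc y1" by blast
    from True signs obtain z1 where z1: "qc z1 < 0" by blast
    define ell where "ell y = - qa y / qc y" for y
    have ell_le: "ell y \<le> ell z" if y: "0 < qc y" and z: "qc z < 0" for y z
    proof -
      define p where "p = qc y"
      define q where "q = - qc z"
      have p: "p > 0" and q: "q > 0" using y z p_def q_def by auto
      \<comment> \<open>rescale y and z so that their qc-values cancel\<close>
      have "qc (sqrt q *\<^sub>R y) + qc (sqrt p *\<^sub>R z) = 0"
        using p q by (simp add: qc_scaleR p_def q_def)
      then have "0 \<le> qa (sqrt q *\<^sub>R y) + qa (sqrt p *\<^sub>R z)" by (rule nonneg)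
      then have "0 \<le> q * qa y + p * qa z" using p q by (simp add: qa_scaleR)
      then have "0 \<le> qa y / p + qa z / q" using p q by (simp add: field_simps)
      then show ?thesis unfolding ell_def p_def q_def by simp
    qed
    define t where "t = Sup (ell ` {y. 0 < qc y})"
    have t_upper: "ell y \<le> t" if "0 < qc y" for y
      unfolding t_def using that ell_le z1 by (intro cSup_upper bdd_aboveI2) auto
    have t_lower: "t \<le> ell z" if "qc z < 0" for z
      unfolding t_def using that ell_le y1 by (intro cSup_least) auto
    show ?thesis
    proof (intro exI allI)
      fix y
      consider "0 < qc y" | "qc y < 0" | "qc y = 0" by linarith
      then show "0 \<le> qa y + t * qc y"
      proof cases
        case 1
        then show ?thesis using t_upper[OF 1] by (simp add: ell_def field_simps)
      next
        case 2
        then show ?thesis using t_lower[OF 2] by (simp add: ell_def field_simps)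
      next
        case 3
        then show ?thesis using nonneg_null by simp
      qed
    qed
  qed
qed

lemma psd_symmetric_entry: "psd P \<Longrightarrow> P$s$r = P$r$s"
  unfolding psd_def by (metis transpose_def vec_lambda_beta)

lemma psd_diagonal_nonneg: "psd P \<Longrightarrow> 0 \<le> P$i$i"
  unfolding psd_def by (metis inner_axis_mat_vec_axis)

lemma psd_row_zero_if_diagonal_zero:
  assumes "psd P" and "P$j$j = 0"
  shows "P$j$s = 0"
proof (rule ccontr)
  assume ne: "P$j$s \<noteq> 0"
  have sym: "transpose P = P" using assms(1) unfolding psd_def by simp
  have "0 \<le> (axis s 1 + c *\<^sub>R axis j 1) \<bullet> (P *v (axis s 1 + c *\<^sub>R axis j 1))" for c
    using assms(1) unfolding psd_def by blast
  then have "0 \<le> P$s$s + 2 * c * P$j$s" for c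
    using assms psd_symmetric_entry[OF assms(1), of j s]
    by (simp add: quadratic_form_add_scaleR[OF sym] inner_axis_mat_vec_axis)
  from this[of "- (P$s$s + 1) / (2 * P$j$s)"] ne show False by (simp add: field_simps)
qed

lemma psd_minus_pivot_rank_one:
  assumes psd: "psd P" and pivot: "0 < P$i$i"
  shows "psd (P - (\<chi> r s. P$i$r * P$i$s / P$i$i))"
proof -
  have sym: "transpose P = P" using psd unfolding psd_def by simp
  have "0 \<le> y \<bullet> ((P - (\<chi> r s. P$i$r * P$i$s / P$i$i)) *v y)" for y
  proof -
    define \<beta> where "\<beta> = y \<bullet> (P *v axis i 1)"
    have \<beta>_row: "\<beta> = (\<Sum>r\<in>UNIV. P$i$r * y$r)"
      unfolding \<beta>_def matrix_vector_mult_basis column_def inner_vec_def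
      using psd_symmetric_entry[OF psd] by (simp add: mult.commute)
    \<comment> \<open>the Schur complement: minimise the form of P over the line y + c e_i\<close>
    have "0 \<le> (y + (- \<beta> / P$i$i) *\<^sub>R axis i 1) \<bullet> (P *v (y + (- \<beta> / P$i$i) *\<^sub>R axis i 1))"
      using psd unfolding psd_def by blast
    also have "\<dots> = y \<bullet> (P *v y) - \<beta>^2 / P$i$i"
      using pivot
      unfolding quadratic_form_add_scaleR[OF sym] inner_axis_mat_vec_axis \<beta>_def[symmetric] by (simp add: field_simps power2_eq_square)
    also have "\<dots> = y \<bullet> ((P - (\<chi> r s. P$i$r * P$i$s / P$i$i)) *v y)"
      unfolding \<beta>_row inner_mat_vec_sum
      by (simp add: power2_eq_square sum_product sum_subtractf sum_divide_distrib algebra_simps)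
    finally show ?thesis .
  qed
  moreover have "transpose (P - (\<chi> r s. P$i$r * P$i$s / P$i$i)) = P - (\<chi> r s. P$i$r * P$i$s / P$i$i)"
    using psd_symmetric_entry[OF psd] by (simp add: vec_eq_iff transpose_def mult.commute)
  ultimately show ?thesis unfolding psd_def by blast
qed

lemma psd_eq_sum_rank_one:
  fixes P :: "real^'n::finite^'n"
  assumes "psd P"
  shows "\<exists>(k::nat) v. P = (\<chi> r s. \<Sum>j<k. v j $ r * v j $ s)"
  using assms
proof (induction "card {i. P$i \<noteq> 0}" arbitrary: P rule: less_induct)
  case less
  show ?case
  proof (cases "P = 0")
    case True
    then show ?thesis by (intro exI[of _ "0::nat"]) (simp add: vec_eq_iff)
  next
    case False
    then obtain i where i: "P$i \<noteq> 0" by (auto simp: vec_eq_iff)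
    have pivot: "0 < P$i$i"
      using i psd_diagonal_nonneg[OF less.prems, of i]
        psd_row_zero_if_diagonal_zero[OF less.prems, of i] by (force simp: vec_eq_iff)
    define v where "v = (\<chi> s. P$i$s / sqrt (P$i$i))"
    define P' where "P' = P - (\<chi> r s. P$i$r * P$i$s / P$i$i)"
    have v_outer: "v$r * v$s = P$i$r * P$i$s / P$i$i" for r s
      using pivot unfolding v_def by (simp add: real_sqrt_mult[symmetric])
    have "P'$i = 0"
      using pivot by (simp add: vec_eq_iff P'_def)
    moreover have "P'$j = 0" if "P$j = 0" for j
      using that psd_symmetric_entry[OF less.prems, of i j] by (simp add: vec_eq_iff P'_def)
    ultimately have "{j. P'$j \<noteq> 0} \<subset> {j. P$j \<noteq> 0}"
      using i by blast
    then have "card {j. P'$j \<noteq> 0} < card {j. P$j \<noteq> 0}"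
      by (intro psubset_card_mono) auto
    moreover have "psd P'"
      unfolding P'_def by (rule psd_minus_pivot_rank_one[OF less.prems pivot])
    ultimately obtain k :: nat and w where w: "P' = (\<chi> r s. \<Sum>j<k. w j $ r * w j $ s)"
      using less.hyps by blast
    have "P$r$s = (\<Sum>j<k. w j $ r * w j $ s) + v$r * v$s" for r s
    proof -
      have "P'$r$s = (\<Sum>j<k. w j $ r * w j $ s)" using w by simp
      then show ?thesis by (simp add: P'_def v_outer)
    qed
    then have "P = (\<chi> r s. \<Sum>j<Suc k. (w(k := v)) j $ r * (w(k := v)) j $ s)"
      by (simp add: vec_eq_iff)
    then show ?thesis by blast
  qed
qed

lemma numerical_range_form_real_imag:
  fixes B G :: "real^'n::finite^'n" and a b :: "real^'n"
  assumes symB: "transpose B = B" and symG: "transpose G = G"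
  defines "z \<equiv> \<chi> r. Complex (a$r) (b$r)"
  shows "(\<Sum>r\<in>UNIV. cnj (z$r) *
      ((\<chi> r s. complex_of_real (B$r$s) + \<i> * complex_of_real (G$r$s)) *v z) $ r)
    = Complex (a \<bullet> (B *v a) + b \<bullet> (B *v b)) (a \<bullet> (G *v a) + b \<bullet> (G *v b))" (is "?L = _")
proof -
  have L: "?L = (\<Sum>r\<in>UNIV. \<Sum>s\<in>UNIV.
      cnj (Complex (a$r) (b$r)) * (Complex (B$r$s) (G$r$s) * Complex (a$s) (b$s)))"
    unfolding z_def matrix_vector_mult_def by (simp add: sum_distrib_left complex_eq_iff)
  \<comment> \<open>the cross terms are antisymmetric forms of symmetric matrices, hence vanish\<close>
  have "Re ?L = a \<bullet> (B *v a) + b \<bullet> (B *v b) - (a \<bullet> (G *v b) - b \<bullet> (G *v a))"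
    unfolding L Re_sum inner_mat_vec_sum by (simp add: sum.distrib sum_subtractf algebra_simps)
  moreover have "Im ?L = a \<bullet> (G *v a) + b \<bullet> (G *v b) + (a \<bullet> (B *v b) - b \<bullet> (B *v a))"
    unfolding L Im_sum inner_mat_vec_sum by (simp add: sum.distrib sum_subtractf algebra_simps)
  ultimately show ?thesis
    using inner_mat_vec_symmetric[OF symB, of a b] inner_mat_vec_symmetric[OF symG, of a b]
    by (simp add: complex_eq_iff)
qed

lemma transpose_partial_transpose: "transpose (partial_transpose B) = partial_transpose (transpose B)"
  by (simp add: vec_eq_iff transpose_def partial_transpose_def)

lemma partial_transpose_diagonal: "partial_transpose B $ r $ r = B $ r $ r"
  by (simp add: partial_transpose_def)

lemma W1i_bdd_below: "bdd_below (W1i B)"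
proof -
  define M where
    "M = (\<chi> r s. complex_of_real (B $ r $ s) + \<i> * complex_of_real (partial_transpose B $ r $ s))"
  define K where "K = (\<Sum>r\<in>UNIV. \<Sum>s\<in>UNIV. cmod (M$r$s))"
  have "- K \<le> c" if "c \<in> W1i B" for c
  proof -
    from that obtain x :: "complex^_" where x: "norm x = 1"
      and eq: "complex_of_real c * (1 + \<i>) = (\<Sum>i\<in>UNIV. cnj (x $ i) * (M *v x) $ i)"
      unfolding W1i_def numerical_range_def M_def by auto
    have x_entry: "cmod (x$i) \<le> 1" for i
      using Finite_Cartesian_Product.norm_nth_le[of x i] x by simp
    have "cmod (cnj (x$r) * (M *v x) $ r) \<le> (\<Sum>s\<in>UNIV. cmod (M$r$s))" for r
    proof -
      have "cmod (cnj (x$r) * (M *v x) $ r) \<le> cmod ((M *v x) $ r)"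
        using x_entry[of r] by (simp add: norm_mult mult_left_le_one_le)
      also have "\<dots> \<le> (\<Sum>s\<in>UNIV. cmod (M$r$s * x$s))"
        unfolding matrix_vector_mult_def by (simp add: norm_sum)
      also have "\<dots> \<le> (\<Sum>s\<in>UNIV. cmod (M$r$s))"
        by (intro sum_mono) (simp add: norm_mult mult_left_le x_entry)
      finally show ?thesis .
    qed
    then have "cmod (complex_of_real c * (1 + \<i>)) \<le> K"
      unfolding eq K_def by (intro order.trans[OF norm_sum] sum_mono)
    moreover have "\<bar>c\<bar> \<le> cmod (complex_of_real c * (1 + \<i>))"
      using abs_Re_le_cmod[of "complex_of_real c * (1 + \<i>)"] by simp
    ultimately show ?thesis by simp
  qed
  then show ?thesis unfolding bdd_below_def by blast
qed

lemma W1i_min_nonneg_imp_form_nonneg: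
  fixes B :: "real^('m::finite \<times> 'n::finite)^('m \<times> 'n)"
  defines "G \<equiv> partial_transpose B"
  assumes symB: "transpose B = B" and W: "0 \<le> W1i_min B"
    and eq: "y \<bullet> (B *v y) + z \<bullet> (B *v z) = y \<bullet> (G *v y) + z \<bullet> (G *v z)"
  shows "0 \<le> y \<bullet> (B *v y) + z \<bullet> (B *v z)"
proof (cases "y = 0 \<and> z = 0")
  case True
  then show ?thesis by simp
next
  case False
  have symG: "transpose G = G" unfolding G_def transpose_partial_transpose symB ..
  define nn where "nn = y \<bullet> y + z \<bullet> z"
  have nn_pos: "0 < nn" unfolding nn_def using False by (auto intro: add_pos_nonneg add_nonneg_pos)
  define a where "a = (1 / sqrt nn) *\<^sub>R y"
  define b where "b = (1 / sqrt nn) *\<^sub>R z"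
  define x where "x = (\<chi> r. Complex (a$r) (b$r))"
  have "norm x = sqrt (a \<bullet> a + b \<bullet> b)"
    unfolding norm_vec_def L2_set_def x_def inner_vec_def
    by (simp add: complex_norm sum.distrib power2_eq_square)
  also have "\<dots> = 1"
    using nn_pos unfolding a_def b_def nn_def by (simp add: add_divide_distrib[symmetric])
  finally have norm_x: "norm x = 1" .
  define c where "c = (y \<bullet> (B *v y) + z \<bullet> (B *v z)) / nn"
  have "a \<bullet> (B *v a) + b \<bullet> (B *v b) = c" "a \<bullet> (G *v a) + b \<bullet> (G *v b) = c"
    unfolding a_def b_def c_def quadratic_form_scaleR using nn_pos eq
    by (simp_all add: power_divide add_divide_distrib[symmetric])
  then have "complex_of_real c * (1 + \<i>) = (\<Sum>r\<in>UNIV. cnj (x$r) *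
      ((\<chi> r s. complex_of_real (B$r$s) + \<i> * complex_of_real (G$r$s)) *v x) $ r)"
    unfolding x_def numerical_range_form_real_imag[OF symB symG] by (simp add: complex_eq_iff)
  then have "complex_of_real c * (1 + \<i>) \<in> numerical_range
      (\<chi> r s. complex_of_real (B $ r $ s) + \<i> * complex_of_real (G $ r $ s))"
    unfolding numerical_range_def using norm_x by blast
  then have "c \<in> W1i B" unfolding W1i_def G_def by simp
  then have "W1i_min B \<le> c" unfolding W1i_min_def by (rule cInf_lower[OF _ W1i_bdd_below])
  with W have "0 \<le> c" by linarith
  then show ?thesis using nn_pos unfolding c_def by (simp add: zero_le_divide_iff)
qed

lemma W1i_min_nonneg_imp_psd_shift:
  fixes B :: "real^('m::finite \<times> 'n::finite)^('m \<times> 'n)"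
  assumes symB: "transpose B = B" and W: "0 \<le> W1i_min B"
  shows "\<exists>t. psd (B + t *\<^sub>R (B - partial_transpose B))"
proof -
  define G where "G = partial_transpose B"
  have symG: "transpose G = G" unfolding G_def transpose_partial_transpose symB ..
  have symD: "transpose (B - G) = B - G"
    using symB symG by (simp add: vec_eq_iff transpose_def)
  define qa where "qa y = y \<bullet> (B *v y)" for y
  define qc where "qc y = y \<bullet> ((B - G) *v y)" for y
  have qc_diff: "qc y = y \<bullet> (B *v y) - y \<bullet> (G *v y)" for y
    unfolding qc_def by (simp add: matrix_vector_mult_diff_rdistrib inner_diff_right)
  obtain t where t: "\<forall>y. 0 \<le> qa y + t * qc y"
  proof (atomize_elim, rule quadratic_nonneg_combination_exists)
    show "qa (c *\<^sub>R y) = c^2 * qa y" "qc (c *\<^sub>R y) = c^2 * qc y" for c y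
      unfolding qa_def qc_def by (rule quadratic_form_scaleR)+
    show "0 \<le> qa y + qa z" if "qc y + qc z = 0" for y z
      using W1i_min_nonneg_imp_form_nonneg[OF symB W, of y z] that
      unfolding qa_def qc_diff G_def by simp
    show "(\<exists>y. 0 < qc y) \<longleftrightarrow> (\<exists>z. qc z < 0)"
      unfolding qc_def
      by (rule zero_diagonal_quadratic_form_signs[OF symD]) (simp add: G_def partial_transpose_diagonal)
  qed
  have "transpose (B + t *\<^sub>R (B - G)) = B + t *\<^sub>R (B - G)"
    using symB symD by (simp add: vec_eq_iff transpose_def)
  moreover have "y \<bullet> ((B + t *\<^sub>R (B - G)) *v y) = qa y + t * qc y" for y
    unfolding qa_def qc_def
    by (simp add: matrix_vector_mult_add_rdistrib scaleR_matrix_vector_assoc[symmetric] inner_add_right)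
  ultimately show ?thesis using t unfolding psd_def G_def by metis
qed

definition choi_map :: "real^('m::finite \<times> 'n::finite)^('m \<times> 'n) \<Rightarrow> real^'m^'m \<Rightarrow> real^'n^'n" where
  "choi_map P X = (\<chi> k l. \<Sum>a\<in>UNIV. \<Sum>b\<in>UNIV. X$a$b * P$(a, k)$(b, l))"

lemma mat_unit_entry: "mat_unit i j $ a $ b = (if a = i \<and> b = j then 1 else 0)"
  unfolding mat_unit_def by simp

lemma matrix_eq_sum_mat_unit: "X = (\<Sum>i\<in>UNIV. \<Sum>j\<in>UNIV. X$i$j *\<^sub>R mat_unit i j)"
proof -
  have "X$i$j * mat_unit i j $ a $ b = (if j = b then if i = a then X$i$j else 0 else 0)" for a b i j
    by (simp add: mat_unit_entry)
  then show ?thesis by (simp add: vec_eq_iff sum_component)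
qed

lemma choi_entry: "choi \<Phi> $ r $ s = \<Phi> (mat_unit (fst r) (fst s)) $ snd r $ snd s"
proof -
  have "mat_unit i j $ fst r $ fst s * \<Phi> (mat_unit i j) $ snd r $ snd s
      = (if j = fst s then if i = fst r then \<Phi> (mat_unit i j) $ snd r $ snd s else 0 else 0)" for i j
    by (auto simp: mat_unit_entry)
  then show ?thesis by (simp add: choi_def)
qed

lemma choi_map_choi:
  assumes "linear \<Phi>"
  shows "choi_map (choi \<Phi>) X = \<Phi> X"
proof -
  have "\<Phi> X = (\<Sum>i\<in>UNIV. \<Sum>j\<in>UNIV. X$i$j *\<^sub>R \<Phi> (mat_unit i j))"
    by (subst matrix_eq_sum_mat_unit) (simp add: linear_sum[OF assms] linear_scale[OF assms])
  then show ?thesis by (simp add: vec_eq_iff choi_map_def choi_entry sum_component)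
qed

lemma choi_map_partial_transpose: "choi_map (partial_transpose P) X = transpose (choi_map P X)"
  by (simp add: vec_eq_iff choi_map_def partial_transpose_def transpose_def)

lemma linear_choi_map: "linear (\<lambda>P. choi_map P X)"
  by (intro linearI)
     (simp_all add: vec_eq_iff choi_map_def sum.distrib sum_distrib_left algebra_simps)

lemma transpose_choi:
  assumes "transpose_preserving \<Phi>"
  shows "transpose (choi \<Phi>) = choi \<Phi>"
proof -
  have "transpose (mat_unit i j) = mat_unit j i" for i j
    by (auto simp: vec_eq_iff transpose_def mat_unit_entry)
  then have "\<Phi> (mat_unit j i) = transpose (\<Phi> (mat_unit i j))" for i j
    using assms unfolding transpose_preserving_def by metis
  then show ?thesis by (simp add: vec_eq_iff transpose_def choi_entry)
qed

lemma choi_map_rank_one: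
  "choi_map (\<chi> r s. v$r * v$s) X = (\<chi> l a. v $ (a, l)) ** X ** transpose (\<chi> l a. v $ (a, l))"
  by (simp add: vec_eq_iff choi_map_def matrix_matrix_mult_def transpose_def
      sum_distrib_left sum_distrib_right, subst sum.swap, simp add: mult_ac)

lemma choi_map_sum_rank_one:
  "choi_map (\<chi> r s. \<Sum>j<k. v j $ r * v j $ s) X
    = (\<Sum>j<k. (\<chi> l a. v j $ (a, l)) ** X ** transpose (\<chi> l a. v j $ (a, l)))"
proof -
  have "(\<chi> r s. \<Sum>j<k. v j $ r * v j $ s) = (\<Sum>j<k. \<chi> r s. v j $ r * v j $ s)"
    by (simp add: vec_eq_iff sum_component)
  then show ?thesis by (simp add: linear_sum[OF linear_choi_map] choi_map_rank_one)
qed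

lemma choi_map_shift_eq_on_symmetric:
  assumes lin: "linear \<Phi>" and tp: "transpose_preserving \<Phi>" and sym: "transpose X = X"
  shows "choi_map (choi \<Phi> + t *\<^sub>R (choi \<Phi> - partial_transpose (choi \<Phi>))) X = \<Phi> X"
proof -
  have "transpose (\<Phi> X) = \<Phi> X"
    using tp sym unfolding transpose_preserving_def by metis
  then show ?thesis
    by (simp add: linear_add[OF linear_choi_map] linear_scale[OF linear_choi_map]
        linear_diff[OF linear_choi_map] choi_map_partial_transpose choi_map_choi[OF lin])
qed

lemma linear_sandwich: "linear (\<lambda>X::real^'m::finite^'m. (A::real^'m^'n::finite) ** X ** transpose A)"
  by (intro linearI)
     (simp_all add: vec_eq_iff matrix_matrix_mult_def sum.distrib algebra_simps sum_distrib_left)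

lemma psd_sandwich:
  assumes "psd X"
  shows "psd (A ** X ** transpose A)"
proof -
  have "v \<bullet> ((A ** X ** transpose A) *v v) = (transpose A *v v) \<bullet> (X *v (transpose A *v v))" for v
    by (simp add: matrix_vector_mul_assoc[symmetric] dot_lmul_matrix[symmetric])
  moreover have "transpose (A ** X ** transpose A) = A ** X ** transpose A"
    using assms unfolding psd_def by (simp add: matrix_transpose_mul matrix_mul_assoc)
  ultimately show ?thesis using assms unfolding psd_def by simp
qed

lemma psd_sum: "(\<And>j. j \<in> J \<Longrightarrow> psd (M j)) \<Longrightarrow> psd (\<Sum>j\<in>J. M j)"
  by (induction J rule: infinite_finite_induct)
     (simp_all add: psd_def vec_eq_iff transpose_def matrix_vector_mult_add_rdistrib inner_add_right)

lemma positive_map_if_sandwich_sum_on_symmetric: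
  fixes \<Phi> :: "real^'m::finite^'m \<Rightarrow> real^'n::finite^'n"
  assumes "\<And>X. transpose X = X \<Longrightarrow> \<Phi> X = (\<Sum>j<k. A j ** X ** transpose (A j))"
  shows "positive_map \<Phi>"
  unfolding positive_map_def
proof (intro allI impI)
  fix X :: "real^'m^'m"
  assume psd: "psd X"
  then have "transpose X = X" unfolding psd_def by simp
  then show "psd (\<Phi> X)" using assms psd by (simp add: psd_sum psd_sandwich)
qed

theorem theorem4p3:
  fixes \<Phi> :: "real^'m::finite^'m \<Rightarrow> real^'n::finite^'n"
  assumes "linear \<Phi>"
    and "transpose_preserving \<Phi>"
    and "W1i_min (choi \<Phi>) \<ge> 0"
  shows "(\<exists>(k::nat) (A :: nat \<Rightarrow> real^'m^'n) (\<Psi> :: real^'m^'m \<Rightarrow> real^'n^'n).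
            linear \<Psi> \<and> (\<forall>X. transpose X = X \<longrightarrow> \<Psi> X = 0) \<and>
            (\<forall>X. \<Phi> X = (\<Sum>j<k. A j ** X ** transpose (A j)) + \<Psi> X))
         \<and> positive_map \<Phi>"
proof -
  obtain t where "psd (choi \<Phi> + t *\<^sub>R (choi \<Phi> - partial_transpose (choi \<Phi>)))"
    using W1i_min_nonneg_imp_psd_shift[OF transpose_choi[OF assms(2)] assms(3)] by blast
  then obtain k :: nat and v
    where v: "choi \<Phi> + t *\<^sub>R (choi \<Phi> - partial_transpose (choi \<Phi>))
                = (\<chi> r s. \<Sum>j<k. v j $ r * v j $ s)"
    using psd_eq_sum_rank_one by blast
  define A where "A j = (\<chi> l a. v j $ (a, l))" for j
  have sandwich: "\<Phi> X = (\<Sum>j<k. A j ** X ** transpose (A j))" if "transpose X = X" for X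
    using choi_map_shift_eq_on_symmetric[OF assms(1,2) that, of t]
    by (simp add: v choi_map_sum_rank_one A_def)
  define \<Psi> where "\<Psi> X = \<Phi> X - (\<Sum>j<k. A j ** X ** transpose (A j))" for X
  have "linear \<Psi>"
    unfolding \<Psi>_def by (intro linear_compose_sub assms(1) linear_compose_sum ballI linear_sandwich)
  then show ?thesis
    using sandwich positive_map_if_sandwich_sum_on_symmetric[OF sandwich]
    by (intro conjI exI[of _ k] exI[of _ A] exI[of _ \<Psi>]) (auto simp: \<Psi>_def)
qed

end
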